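(* Consider the dynamic panel logit AR(2) model with $T=4$: binary outcomes $Y_{-1},Y_0,Y_1,\dots,Y_4\in\{0,1\}$, regressors $X=(X_1,\dots,X_4)\in\mathbb{R}^{K\times4}$, fixed effect $A\in\mathbb{R}$, with, for $t\in\{1,\dots,4\}$, $$\Pr(Y_t=1\mid Y_{-1},\dots,Y_{t-1},X,A)=\frac{\exp(X_t'\beta_0+Y_{t-1}\gamma_{0,1}+Y_{t-2}\gamma_{0,2}+A)}{1+\exp(X_t'\beta_0+Y_{t-1}\gamma_{0,1}+Y_{t-2}\gamma_{0,2}+A)}$$ and true parameters $\beta_0\in\mathbb{R}^K$, $\gamma_0=(\gamma_{0,1},\gamma_{0,2})\in\mathbb{R}^2$. For initial conditions $y^{(0)}=(y_{-1},y_0)\in\{0,1\}^2$, $y=(y_1,\dots,y_4)\in\{0,1\}^4$, $x\in\mathbb{R}^{K\times4}$, $\beta\in\mathbb{R}^K$, $\gamma=(\gamma_1,\gamma_2)\in\mathbb{R}^2$, let $z_t=x_t'\beta+y_{t-1}\gamma_1+y_{t-2}\gamma_2$ and $z_{ts}=z_t-z_s$. Define $$m^{(a)}_{y^{(0)}}=\begin{cases}e^{z_{23}}-e^{z_{43}}&y=(0,0,1,0),\\ e^{z_{24}}-1&y=(0,0,1,1),\\ -1&(y_1,y_2)=(0,1),\\ e^{z_{41}+\gamma_1}&(y_1,y_2,y_3)=(1,0,0),\\ e^{z_{41}}[1+e^{z_{23}}-e^{z_{43}}]&y=(1,0,1,0),\\ e^{z_{21}}&y=(1,0,1,1),\\ 0&\text{otherwise},\end{cases}\qquad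 m^{(b)}_{y^{(0)}}=\begin{cases}e^{z_{12}}&y=(0,1,0,0),\\ e^{z_{14}}[1+e^{z_{32}}-e^{z_{34}}]&y=(0,1,0,1),\\ e^{z_{14}+\gamma_1}&(y_1,y_2,y_3)=(0,1,1),\\ -1&(y_1,y_2)=(1,0),\\ e^{z_{42}}-1&y=(1,1,0,0),\\ e^{z_{32}}-e^{z_{34}}&y=(1,1,0,1),\\0&\text{otherwise},\end{cases}$$ $$m^{(c)}_{y^{(0)}}=\begin{cases}[e^{z_{24}}-1][1-e^{z_{34}}]&y=(0,0,0,1),\\ e^{z_{24}+\gamma_1}-1&(y_1,y_2,y_3)=(0,0,1),\\ -1&(y_1,y_2)=(0,1),\\ e^{z_{41}}&y=(1,0,0,0),\\ e^{z_{21}}[1+e^{z_{32}}-e^{z_{34}}]&y=(1,0,0,1),\\ e^{z_{21}}&(y_1,y_2,y_3)=(1,0,1),\\0&\text{otherwise},\end{cases}\qquad m^{(d)}_{y^{(0)}}=\begin{cases}e^{z_{12}}&(y_1,y_2,y_3)=(0,1,0),\\ e^{z_{12}}[1+e^{z_{23}}-e^{z_{43}}]&y=(0,1,1,0),\\ e^{z_{14}}&y=(0,1,1,1),\\ -1&(y_1,y_2)=(1,0),\\ e^{z_{42}+\gamma_1}-1&(y_1,y_2,y_3)=(1,1,0),\\ [e^{z_{42}}-1][1-e^{z_{43}}]&y=(1,1,1,0),\\0&\text{otherwise},\end{cases}$$ all as functions of $(y,x,\beta,\gamma)$. Then for all $y^{(0)}\in\{0,1\}^2$, $x\in\mathbb{R}^{K\times4}$,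 $\alpha\in\mathbb{R}$ and $\xi\in\{a,b,c,d\}$, $$\mathbb{E}\big[m^{(\xi)}_{y^{(0)}}(Y,X,\beta_0,\gamma_0)\mid (Y_{-1},Y_0)=y^{(0)},X=x,A=\alpha\big]=0,$$ where $Y=(Y_1,\dots,Y_4)$.
   Context: The joint distribution of the initial conditions, $X$ and $A$ is unrestricted; only the conditional law of $(Y_1,\dots,Y_4)$ given $((Y_{-1},Y_0),X,A)$ is specified by the model. In $z_t$, $y_{-1},y_0$ are the initial conditions. *)

theory Defs
  imports "HOL-Analysis.Analysis"
begin

text \<open>Outcome path: Y(-1), Y(0) are the initial conditions, Y(1..4) the outcomes.
  Regressors: x t :: real^'k for t = 1..4 (K = CARD('k)).\<close>

definition path :: "bool \<Rightarrow> bool \<Rightarrow> bool \<Rightarrow> bool \<Rightarrow> bool \<Rightarrow> bool \<Rightarrow> int \<Rightarrow> bool" where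
  "path ym1 y0 y1 y2 y3 y4 t =
     (if t = -1 then ym1 else if t = 0 then y0 else if t = 1 then y1
      else if t = 2 then y2 else if t = 3 then y3 else y4)"

definition zz :: "(int \<Rightarrow> bool) \<Rightarrow> (int \<Rightarrow> real^'k) \<Rightarrow> real^'k \<Rightarrow> real \<Rightarrow> real \<Rightarrow> int \<Rightarrow> real" where
  "zz Y x \<beta> g1 g2 t = x t \<bullet> \<beta> + of_bool (Y (t - 1)) * g1 + of_bool (Y (t - 2)) * g2"

definition logistic :: "real \<Rightarrow> real" where
  "logistic u = exp u / (1 + exp u)"

definition path_prob :: "(int \<Rightarrow> bool) \<Rightarrow> (int \<Rightarrow> real^'k) \<Rightarrow> real^'k \<Rightarrow> real \<Rightarrow> real \<Rightarrow> real \<Rightarrow> real" where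
  "path_prob Y x \<beta> g1 g2 \<alpha> =
     (\<Prod>t\<in>{1..4::int}. (let p = logistic (zz Y x \<beta> g1 g2 t + \<alpha>)
                           in if Y t then p else 1 - p))"

datatype xi = Xa | Xb | Xc | Xd

definition m_fun :: "xi \<Rightarrow> (int \<Rightarrow> bool) \<Rightarrow> (int \<Rightarrow> real^'k) \<Rightarrow> real^'k \<Rightarrow> real \<Rightarrow> real \<Rightarrow> real" where
  "m_fun \<xi> Y x \<beta> g1 g2 =
    (let z = zz Y x \<beta> g1 g2; y1 = Y 1; y2 = Y 2; y3 = Y 3; y4 = Y 4;
         e = (\<lambda>t s. exp (z t - z s)) in
     case \<xi> of
       Xa \<Rightarrow>
        (if (y1,y2,y3,y4) = (False,False,True,False) then e 2 3 - e 4 3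
         else if (y1,y2,y3,y4) = (False,False,True,True) then e 2 4 - 1
         else if (y1,y2) = (False,True) then -1
         else if (y1,y2,y3) = (True,False,False) then exp (z 4 - z 1 + g1)
         else if (y1,y2,y3,y4) = (True,False,True,False) then e 4 1 * (1 + e 2 3 - e 4 3)
         else if (y1,y2,y3,y4) = (True,False,True,True) then e 2 1
         else 0)
     | Xb \<Rightarrow>
        (if (y1,y2,y3,y4) = (False,True,False,False) then e 1 2
         else if (y1,y2,y3,y4) = (False,True,False,True) then e 1 4 * (1 + e 3 2 - e 3 4)
         else if (y1,y2,y3) = (False,True,True) then exp (z 1 - z 4 + g1)
         else if (y1,y2) = (True,False) then -1
         else if (y1,y2,y3,y4) = (True,True,False,False) then e 4 2 - 1
         else if (y1,y2,y3,y4) = (True,True,False,True) then e 3 2 - e 3 4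
         else 0)
     | Xc \<Rightarrow>
        (if (y1,y2,y3,y4) = (False,False,False,True) then (e 2 4 - 1) * (1 - e 3 4)
         else if (y1,y2,y3) = (False,False,True) then exp (z 2 - z 4 + g1) - 1
         else if (y1,y2) = (False,True) then -1
         else if (y1,y2,y3,y4) = (True,False,False,False) then e 4 1
         else if (y1,y2,y3,y4) = (True,False,False,True) then e 2 1 * (1 + e 3 2 - e 3 4)
         else if (y1,y2,y3) = (True,False,True) then e 2 1
         else 0)
     | Xd \<Rightarrow>
        (if (y1,y2,y3) = (False,True,False) then e 1 2
         else if (y1,y2,y3,y4) = (False,True,True,False) then e 1 2 * (1 + e 2 3 - e 4 3)
         else if (y1,y2,y3,y4) = (False,True,True,True) then e 1 4
         else if (y1,y2) = (True,False) then -1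
         else if (y1,y2,y3) = (True,True,False) then exp (z 4 - z 2 + g1) - 1
         else if (y1,y2,y3,y4) = (True,True,True,False) then (e 4 2 - 1) * (1 - e 4 3)
         else 0))"

definition cond_exp_m :: "xi \<Rightarrow> bool \<Rightarrow> bool \<Rightarrow> (int \<Rightarrow> real^'k) \<Rightarrow> real \<Rightarrow> real^'k \<Rightarrow> real \<Rightarrow> real \<Rightarrow> real" where
  "cond_exp_m \<xi> ym1 y0 x \<alpha> \<beta>0 g01 g02 =
     (\<Sum>y1\<in>UNIV. \<Sum>y2\<in>UNIV. \<Sum>y3\<in>UNIV. \<Sum>y4\<in>UNIV.
        path_prob (path ym1 y0 y1 y2 y3 y4) x \<beta>0 g01 g02 \<alpha>
        * m_fun \<xi> (path ym1 y0 y1 y2 y3 y4) x \<beta>0 g01 g02)"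

end

theory Submission
  imports Defs
begin

text \<open>Given the initial conditions, X = x and A = \<alpha>, the odds of Y(t) = 1 are exp (z(t) + \<alpha>):
  a baseline odds times exp g1 if Y(t-1) = 1 and times exp g2 if Y(t-2) = 1.  The moment
  functions only involve ratios exp (z(t) - z(s)) of these odds, so \<alpha> cancels and the claim
  becomes a rational identity in six positive reals.  It follows by iterated expectations:
  averaging out Y(4) and then Y(3) leaves a closed-form function of (Y(1), Y(2)) whose
  expectation visibly vanishes.\<close>

definition prob_of_odds :: "real \<Rightarrow> bool \<Rightarrow> real" where
  "prob_of_odds R b = (if b then R / (1 + R) else 1 / (1 + R))"

definition lag_factor :: "real \<Rightarrow> bool \<Rightarrow> real" where
  "lag_factor G b = (if b then G else 1)"

lemma logistic_eq_prob_of_odds: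
  "(if b then logistic u else 1 - logistic u) = prob_of_odds (exp u) b"
proof -
  have "1 + exp u \<noteq> 0"
    by (metis add_pos_pos exp_gt_zero order_less_imp_not_eq2 zero_less_one)
  then show ?thesis
    by (simp add: logistic_def prob_of_odds_def field_simps)
qed

lemma path_outcomes:
  "path ym1 y0 y1 y2 y3 y4 1 = y1" "path ym1 y0 y1 y2 y3 y4 2 = y2"
  "path ym1 y0 y1 y2 y3 y4 3 = y3" "path ym1 y0 y1 y2 y3 y4 4 = y4"
  by (simp_all add: path_def)

text \<open>The moment functions of \<^const>\<open>m_fun\<close>, with exp (z(t) - z(s)) written as the odds ratio
  r t / r s and exp g1 as G.\<close>

definition moment_odds :: "xi \<Rightarrow> (int \<Rightarrow> real) \<Rightarrow> real \<Rightarrow> bool \<Rightarrow> bool \<Rightarrow> bool \<Rightarrow> bool \<Rightarrow> real" where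
  "moment_odds \<xi> r G y1 y2 y3 y4 =
    (let e = (\<lambda>t s. r t / r s) in
     case \<xi> of
       Xa \<Rightarrow>
        (if (y1,y2,y3,y4) = (False,False,True,False) then e 2 3 - e 4 3
         else if (y1,y2,y3,y4) = (False,False,True,True) then e 2 4 - 1
         else if (y1,y2) = (False,True) then -1
         else if (y1,y2,y3) = (True,False,False) then e 4 1 * G
         else if (y1,y2,y3,y4) = (True,False,True,False) then e 4 1 * (1 + e 2 3 - e 4 3)
         else if (y1,y2,y3,y4) = (True,False,True,True) then e 2 1
         else 0)
     | Xb \<Rightarrow>
        (if (y1,y2,y3,y4) = (False,True,False,False) then e 1 2
         else if (y1,y2,y3,y4) = (False,True,False,True) then e 1 4 * (1 + e 3 2 - e 3 4)
         else if (y1,y2,y3) = (False,True,True) then e 1 4 * G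
         else if (y1,y2) = (True,False) then -1
         else if (y1,y2,y3,y4) = (True,True,False,False) then e 4 2 - 1
         else if (y1,y2,y3,y4) = (True,True,False,True) then e 3 2 - e 3 4
         else 0)
     | Xc \<Rightarrow>
        (if (y1,y2,y3,y4) = (False,False,False,True) then (e 2 4 - 1) * (1 - e 3 4)
         else if (y1,y2,y3) = (False,False,True) then e 2 4 * G - 1
         else if (y1,y2) = (False,True) then -1
         else if (y1,y2,y3,y4) = (True,False,False,False) then e 4 1
         else if (y1,y2,y3,y4) = (True,False,False,True) then e 2 1 * (1 + e 3 2 - e 3 4)
         else if (y1,y2,y3) = (True,False,True) then e 2 1
         else 0)
     | Xd \<Rightarrow>
        (if (y1,y2,y3) = (False,True,False) then e 1 2
         else if (y1,y2,y3,y4) = (False,True,True,False) then e 1 2 * (1 + e 2 3 - e 4 3)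
         else if (y1,y2,y3,y4) = (False,True,True,True) then e 1 4
         else if (y1,y2) = (True,False) then -1
         else if (y1,y2,y3) = (True,True,False) then e 4 2 * G - 1
         else if (y1,y2,y3,y4) = (True,True,True,False) then (e 4 2 - 1) * (1 - e 4 3)
         else 0))"

text \<open>R1 is the odds of Y(1), which absorbs the initial conditions; B2, B3, B4 are the odds of
  Y(2), Y(3), Y(4) when the lagged outcomes among Y(1..3) are 0, and G1, G2 the odds factors
  for a 1 at lag one and two.\<close>

locale ar2_odds =
  fixes R1 B2 B3 B4 G1 G2 :: real
  assumes pos: "0 < R1" "0 < B2" "0 < B3" "0 < B4" "0 < G1" "0 < G2"
begin

definition period_odds :: "bool \<Rightarrow> bool \<Rightarrow> bool \<Rightarrow> int \<Rightarrow> real" where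
  "period_odds y1 y2 y3 t =
    (if t = 1 then R1
     else if t = 2 then B2 * lag_factor G1 y1
     else if t = 3 then B3 * lag_factor G1 y2 * lag_factor G2 y1
     else B4 * lag_factor G1 y3 * lag_factor G2 y2)"

lemma period_odds_simps [simp]:
  "period_odds y1 y2 y3 1 = R1"
  "period_odds y1 y2 y3 2 = B2 * lag_factor G1 y1"
  "period_odds y1 y2 y3 3 = B3 * lag_factor G1 y2 * lag_factor G2 y1"
  "period_odds y1 y2 y3 4 = B4 * lag_factor G1 y3 * lag_factor G2 y2"
  by (simp_all add: period_odds_def)

definition moment_given_y123 :: "xi \<Rightarrow> bool \<Rightarrow> bool \<Rightarrow> bool \<Rightarrow> real" where
  "moment_given_y123 \<xi> y1 y2 y3 =
    (\<Sum>y4\<in>UNIV. prob_of_odds (B4 * lag_factor G1 y3 * lag_factor G2 y2) y4 *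
       moment_odds \<xi> (period_odds y1 y2 y3) G1 y1 y2 y3 y4)"

definition moment_given_y12 :: "xi \<Rightarrow> bool \<Rightarrow> bool \<Rightarrow> real" where
  "moment_given_y12 \<xi> y1 y2 =
    (\<Sum>y3\<in>UNIV. prob_of_odds (B3 * lag_factor G1 y2 * lag_factor G2 y1) y3 *
       moment_given_y123 \<xi> y1 y2 y3)"

definition expected_moment :: "xi \<Rightarrow> real" where
  "expected_moment \<xi> =
    (\<Sum>y1\<in>UNIV. prob_of_odds R1 y1 *
      (\<Sum>y2\<in>UNIV. prob_of_odds (B2 * lag_factor G1 y1) y2 * moment_given_y12 \<xi> y1 y2))"

lemma expected_moment_Xa: "expected_moment Xa = 0"
proof -
  have given_y123: "moment_given_y123 Xa y1 y2 y3 =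
    (if y1 then
       (if y2 then 0
        else if y3 then (B4*G1/R1) * (1 + (B2*G1 - B4*G1)/(B3*G2) + B2*G1) / (1 + B4*G1)
        else B4*G1/R1)
     else
       (if y2 then -1
        else if y3 then (B2 - B4*G1) * (1 + B3) / (B3 * (1 + B4*G1))
        else 0))" for y1 y2 y3
    using pos
    by (cases y1; cases y2; cases y3;
        simp add: moment_given_y123_def UNIV_bool prob_of_odds_def lag_factor_def moment_odds_def)
       (simp_all add: field_simps add_pos_pos order_less_imp_not_eq2)
  have given_y12: "moment_given_y12 Xa y1 y2 =
    (if y1 then (if y2 then 0 else (B4*G1/R1) * (1 + B2*G1) / (1 + B4*G1))
     else (if y2 then -1 else (B2 - B4*G1) / (1 + B4*G1)))" for y1 y2
    using pos
    by (cases y1; cases y2;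
        simp add: moment_given_y12_def given_y123 UNIV_bool prob_of_odds_def lag_factor_def)
       (simp_all add: field_simps add_pos_pos order_less_imp_not_eq2)
  show ?thesis
    using pos
    by (simp add: expected_moment_def given_y12 UNIV_bool prob_of_odds_def lag_factor_def)
       (simp add: field_simps add_pos_pos order_less_imp_not_eq2)
qed

lemma expected_moment_Xb: "expected_moment Xb = 0"
proof -
  have given_y123: "moment_given_y123 Xb y1 y2 y3 =
    (if y1 then
       (if y2 then (if y3 then 0 else (1 + B3*G1*G2) * (B4*G2 - B2*G1) / (B2*G1 * (1 + B4*G2)))
        else -1)
     else
       (if y2 then
          (if y3 then R1/(B4*G2)
           else R1 * ((1 + B3*G1)/B2 + 1 - B3*G1/(B4*G2)) / (1 + B4*G2))
        else 0))" for y1 y2 y3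
    using pos
    by (cases y1; cases y2; cases y3;
        simp add: moment_given_y123_def UNIV_bool prob_of_odds_def lag_factor_def moment_odds_def)
       (simp_all add: field_simps add_pos_pos order_less_imp_not_eq2)
  have given_y12: "moment_given_y12 Xb y1 y2 =
    (if y1 then (if y2 then (B4*G2 - B2*G1) / (B2*G1 * (1 + B4*G2)) else -1)
     else (if y2 then R1 * (1 + B2) / (B2 * (1 + B4*G2)) else 0))" for y1 y2
    using pos
    by (cases y1; cases y2;
        simp add: moment_given_y12_def given_y123 UNIV_bool prob_of_odds_def lag_factor_def)
       (simp_all add: field_simps add_pos_pos order_less_imp_not_eq2)
  show ?thesis
    using pos
    by (simp add: expected_moment_def given_y12 UNIV_bool prob_of_odds_def lag_factor_def)
       (simp add: field_simps add_pos_pos order_less_imp_not_eq2)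
qed

lemma expected_moment_Xc: "expected_moment Xc = 0"
proof -
  have given_y123: "moment_given_y123 Xc y1 y2 y3 =
    (if y1 then
       (if y2 then 0
        else if y3 then B2*G1/R1
        else (B4 + B4*B2*G1 + B4*B3*G2 - B2*G1*B3*G2) / (R1 * (1 + B4)))
     else
       (if y2 then -1
        else if y3 then B2/B4 - 1
        else (B2 - B4) * (B4 - B3) / (B4 * (1 + B4))))" for y1 y2 y3
    using pos
    by (cases y1; cases y2; cases y3;
        simp add: moment_given_y123_def UNIV_bool prob_of_odds_def lag_factor_def moment_odds_def)
       (simp_all add: field_simps add_pos_pos order_less_imp_not_eq2)
  have given_y12: "moment_given_y12 Xc y1 y2 =
    (if y1 then (if y2 then 0 else B4 * (1 + B2*G1) / (R1 * (1 + B4)))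
     else (if y2 then -1 else (B2 - B4) / (1 + B4)))" for y1 y2
    using pos
    by (cases y1; cases y2;
        simp add: moment_given_y12_def given_y123 UNIV_bool prob_of_odds_def lag_factor_def)
       (simp_all add: field_simps add_pos_pos order_less_imp_not_eq2)
  show ?thesis
    using pos
    by (simp add: expected_moment_def given_y12 UNIV_bool prob_of_odds_def lag_factor_def)
       (simp add: field_simps add_pos_pos order_less_imp_not_eq2)
qed

lemma expected_moment_Xd: "expected_moment Xd = 0"
proof -
  have given_y123: "moment_given_y123 Xd y1 y2 y3 =
    (if y1 then
       (if y2 then
          (if y3 then (B4*G2/B2 - 1) * (1 - B4/B3) / (1 + B4*G1*G2)
           else B4*G2/B2 - 1)
        else -1)
     else
       (if y2 then
          (if y3 then R1 * (1/B2 + 1/(B3*G1) - B4*G2/(B2*B3) + 1) / (1 + B4*G1*G2)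
           else R1/B2)
        else 0))" for y1 y2 y3
    using pos
    by (cases y1; cases y2; cases y3;
        simp add: moment_given_y123_def UNIV_bool prob_of_odds_def lag_factor_def moment_odds_def)
       (simp_all add: field_simps add_pos_pos order_less_imp_not_eq2)
  have given_y12: "moment_given_y12 Xd y1 y2 =
    (if y1 then (if y2 then (B4*G2 - B2) / (B2 * (1 + B4*G1*G2)) else -1)
     else (if y2 then R1 * (1 + B2) / (B2 * (1 + B4*G1*G2)) else 0))" for y1 y2
    using pos
    by (cases y1; cases y2;
        simp add: moment_given_y12_def given_y123 UNIV_bool prob_of_odds_def lag_factor_def)
       (simp_all add: field_simps add_pos_pos order_less_imp_not_eq2)
  show ?thesis
    using pos
    by (simp add: expected_moment_def given_y12 UNIV_bool prob_of_odds_def lag_factor_def)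
       (simp add: field_simps add_pos_pos order_less_imp_not_eq2)
qed

lemma expected_moment_eq_0: "expected_moment \<xi> = 0"
  by (cases \<xi>) (simp_all add: expected_moment_Xa expected_moment_Xb expected_moment_Xc expected_moment_Xd)

end

locale ar2_logit_path =
  fixes x :: "int \<Rightarrow> real^'k" and \<beta> :: "real^'k" and g1 g2 \<alpha> :: real and ym1 y0 :: bool

sublocale ar2_logit_path \<subseteq> ar2_odds
  "exp (x 1 \<bullet> \<beta> + of_bool y0 * g1 + of_bool ym1 * g2 + \<alpha>)"
  "exp (x 2 \<bullet> \<beta> + of_bool y0 * g2 + \<alpha>)" "exp (x 3 \<bullet> \<beta> + \<alpha>)" "exp (x 4 \<bullet> \<beta> + \<alpha>)"
  "exp g1" "exp g2"
  by unfold_locales simp_all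

context ar2_logit_path
begin

lemma exp_zz_path:
  "exp (zz (path ym1 y0 y1 y2 y3 y4) x \<beta> g1 g2 1 + \<alpha>) = period_odds y1 y2 y3 1"
  "exp (zz (path ym1 y0 y1 y2 y3 y4) x \<beta> g1 g2 2 + \<alpha>) = period_odds y1 y2 y3 2"
  "exp (zz (path ym1 y0 y1 y2 y3 y4) x \<beta> g1 g2 3 + \<alpha>) = period_odds y1 y2 y3 3"
  "exp (zz (path ym1 y0 y1 y2 y3 y4) x \<beta> g1 g2 4 + \<alpha>) = period_odds y1 y2 y3 4"
  unfolding period_odds_def zz_def path_def lag_factor_def
  by (simp_all add: mult_exp_exp algebra_simps)

lemma path_prob_path:
  "path_prob (path ym1 y0 y1 y2 y3 y4) x \<beta> g1 g2 \<alpha> =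
    prob_of_odds (period_odds y1 y2 y3 1) y1 * prob_of_odds (period_odds y1 y2 y3 2) y2 *
    prob_of_odds (period_odds y1 y2 y3 3) y3 * prob_of_odds (period_odds y1 y2 y3 4) y4"
proof -
  have "{1..4::int} = {1, 2, 3, 4}" by auto
  then show ?thesis
    unfolding path_prob_def Let_def logistic_eq_prob_of_odds
    by (simp add: exp_zz_path path_outcomes mult.assoc del: period_odds_simps)
qed

lemma m_fun_path:
  "m_fun \<xi> (path ym1 y0 y1 y2 y3 y4) x \<beta> g1 g2 =
    moment_odds \<xi> (period_odds y1 y2 y3) (exp g1) y1 y2 y3 y4"
proof -
  let ?z = "zz (path ym1 y0 y1 y2 y3 y4) x \<beta> g1 g2"
  have ratio: "exp (?z t - ?z s) = exp (?z t + \<alpha>) / exp (?z s + \<alpha>)" for t s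
    by (simp add: exp_diff[symmetric])
  have shift: "exp (a - b + g1) = exp (a - b) * exp g1" for a b
    by (rule exp_add)
  show ?thesis
    unfolding m_fun_def moment_odds_def Let_def shift ratio exp_zz_path path_outcomes ..
qed

lemma cond_exp_m_eq_expected_moment:
  "cond_exp_m \<xi> ym1 y0 x \<alpha> \<beta> g1 g2 = expected_moment \<xi>"
  unfolding cond_exp_m_def expected_moment_def moment_given_y12_def moment_given_y123_def
    path_prob_path m_fun_path period_odds_simps sum_distrib_left
  by (simp add: mult.assoc)

end

theorem lemma3:
  fixes \<beta>0 :: "real^'k" and g01 g02 :: real
    and ym1 y0 :: bool and x :: "int \<Rightarrow> real^'k" and \<alpha> :: real and \<xi> :: xi
  shows "cond_exp_m \<xi> ym1 y0 x \<alpha> \<beta>0 g01 g02 = 0"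
proof -
  interpret ar2_logit_path x \<beta>0 g01 g02 \<alpha> ym1 y0 .
  show ?thesis
    by (simp add: cond_exp_m_eq_expected_moment expected_moment_eq_0)
qed

end
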